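(* Let $\mathbf{X}\in\{0,1\}^{m\times n}$ be superfirm and let $(\ell,k)\in\mathrm{supp}(\mathbf{X})$. Then $\mathcal{S}^{(\ell,k)}(\mathbf{X})$ is firm. Furthermore, if $(\ell,k)$ is a simplicial $1$ of $\mathbf{X}$, then $\mathcal{S}^{(\ell,k)}(\mathbf{X})$ is superfirm.
   Context: For a binary matrix $\mathbf{X}$, $\mathrm{supp}(\mathbf{X})=\{(i,j):x_{i,j}=1\}$. A submatrix indexed by $I\times J$ is obtained by deleting the rows not in $I$ and the columns not in $J$. A rectangle of $\mathbf{X}$ is a set $I\times J\subseteq\mathrm{supp}(\mathbf{X})$. An isolated set is a subset of $\mathrm{supp}(\mathbf{X})$ no two distinct elements of which lie in a common rectangle; $i(\mathbf{X})$ is the maximum size of an isolated set, and $br(\mathbf{X})$ (the Boolean rank) is the minimum number of rectangles whose union is $\mathrm{supp}(\mathbf{X})$. $\mathbf{X}$ is firm if $i(\mathbf{X}')=br(\mathbf{X}')$ for every submatrix $\mathbf{X}'$ of $\mathbf{X}$, including $\mathbf{X}$ itself. The rectangle cover graph $\mathcal{G}(\mathbf{X})$ has vertex set $\mathrm{supp}(\mathbf{X})$, two vertices being adjacent iff some rectangle of $\mathbf{X}$ contains both. $\mathbf{X}$ is superfirm if $\mathcal{G}(\mathbf{X})$ is a perfect graph. A position $(\ell,k)\in\mathrm{supp}(\mathbf{X})$ is a simplicial $1$ if, with $I=\{i:x_{i,k}=1\}$ and $J=\{j:x_{\ell,j}=1\}$, $I\times J\subseteq\mathrm{supp}(\mathbf{X})$.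 Stretching: for $\mathbf{X}\in\{0,1\}^{m\times n}$ and $(\ell,k)\in\mathrm{supp}(\mathbf{X})$, $\mathcal{S}^{(\ell,k)}(\mathbf{X})$ is the $(m+1)\times(n+1)$ binary matrix whose entries $(i,j)$ with $i\in[m],j\in[n]$ equal $x_{i,j}$, whose entries at $(\ell,n+1)$, $(m+1,k)$, $(m+1,n+1)$ equal $1$, and all of whose other entries equal $0$. *)

theory Defs
  imports Main
begin

text \<open>A binary m x n matrix is given by its dimensions m, n and an entry function
  X :: nat => nat => bool (entry (i,j) equals 1 iff X i j), with 0-based indices
  i < m, j < n; values of X outside this range are irrelevant.\<close>

type_synonym bmat = "nat \<Rightarrow> nat \<Rightarrow> bool"

definition supp :: "nat \<Rightarrow> nat \<Rightarrow> bmat \<Rightarrow> (nat \<times> nat) set" where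
  "supp m n X = {(i, j). i < m \<and> j < n \<and> X i j}"

definition is_rectangle :: "nat \<Rightarrow> nat \<Rightarrow> bmat \<Rightarrow> (nat \<times> nat) set \<Rightarrow> bool" where
  "is_rectangle m n X R \<longleftrightarrow> (\<exists>I J. R = I \<times> J \<and> I \<times> J \<subseteq> supp m n X)"

definition isolated_set :: "nat \<Rightarrow> nat \<Rightarrow> bmat \<Rightarrow> (nat \<times> nat) set \<Rightarrow> bool" where
  "isolated_set m n X S \<longleftrightarrow> S \<subseteq> supp m n X \<and>
     (\<forall>a\<in>S. \<forall>b\<in>S. a \<noteq> b \<longrightarrow> \<not> (\<exists>R. is_rectangle m n X R \<and> a \<in> R \<and> b \<in> R))"

definition isol_num :: "nat \<Rightarrow> nat \<Rightarrow> bmat \<Rightarrow> nat" where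
  "isol_num m n X = Max {card S | S. isolated_set m n X S}"

definition boolean_rank :: "nat \<Rightarrow> nat \<Rightarrow> bmat \<Rightarrow> nat" where
  "boolean_rank m n X = (LEAST k. \<exists>F. finite F \<and> card F = k \<and>
      (\<forall>R\<in>F. is_rectangle m n X R) \<and> \<Union>F = supp m n X)"

text \<open>Submatrix indexed by I x J: delete rows not in I and columns not in J;
  the remaining rows/columns are renumbered in increasing order.\<close>

definition submatrix :: "bmat \<Rightarrow> nat set \<Rightarrow> nat set \<Rightarrow> bmat" where
  "submatrix X I J = (\<lambda>a b. X (sorted_list_of_set I ! a) (sorted_list_of_set J ! b))"

definition firm :: "nat \<Rightarrow> nat \<Rightarrow> bmat \<Rightarrow> bool" where
  "firm m n X \<longleftrightarrow> (\<forall>I J. I \<subseteq> {..<m} \<longrightarrow> J \<subseteq> {..<n} \<longrightarrow>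
      isol_num (card I) (card J) (submatrix X I J) = boolean_rank (card I) (card J) (submatrix X I J))"

definition is_clique :: "('v \<Rightarrow> 'v \<Rightarrow> bool) \<Rightarrow> 'v set \<Rightarrow> bool" where
  "is_clique E K \<longleftrightarrow> (\<forall>u\<in>K. \<forall>v\<in>K. u \<noteq> v \<longrightarrow> E u v)"

definition clique_number :: "'v set \<Rightarrow> ('v \<Rightarrow> 'v \<Rightarrow> bool) \<Rightarrow> nat" where
  "clique_number W E = Max {card K | K. K \<subseteq> W \<and> is_clique E K}"

definition chromatic_number :: "'v set \<Rightarrow> ('v \<Rightarrow> 'v \<Rightarrow> bool) \<Rightarrow> nat" where
  "chromatic_number W E = (LEAST k. \<exists>c :: 'v \<Rightarrow> nat. (\<forall>v\<in>W. c v < k) \<and>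
      (\<forall>u\<in>W. \<forall>v\<in>W. u \<noteq> v \<longrightarrow> E u v \<longrightarrow> c u \<noteq> c v))"

definition perfect_graph :: "'v set \<Rightarrow> ('v \<Rightarrow> 'v \<Rightarrow> bool) \<Rightarrow> bool" where
  "perfect_graph V E \<longleftrightarrow> (\<forall>W\<subseteq>V. chromatic_number W E = clique_number W E)"

definition rc_adj :: "nat \<Rightarrow> nat \<Rightarrow> bmat \<Rightarrow> nat \<times> nat \<Rightarrow> nat \<times> nat \<Rightarrow> bool" where
  "rc_adj m n X a b \<longleftrightarrow> a \<noteq> b \<and> (\<exists>R. is_rectangle m n X R \<and> a \<in> R \<and> b \<in> R)"

definition superfirm :: "nat \<Rightarrow> nat \<Rightarrow> bmat \<Rightarrow> bool" where
  "superfirm m n X \<longleftrightarrow> perfect_graph (supp m n X) (rc_adj m n X)"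

definition simplicial_one :: "nat \<Rightarrow> nat \<Rightarrow> bmat \<Rightarrow> nat \<Rightarrow> nat \<Rightarrow> bool" where
  "simplicial_one m n X l k \<longleftrightarrow> (l, k) \<in> supp m n X \<and>
     {i. i < m \<and> X i k} \<times> {j. j < n \<and> X l j} \<subseteq> supp m n X"

text \<open>Stretching at (l,k): an (m+1) x (n+1) matrix; new row index m, new column index n.\<close>

definition stretch :: "nat \<Rightarrow> nat \<Rightarrow> bmat \<Rightarrow> nat \<Rightarrow> nat \<Rightarrow> bmat" where
  "stretch m n X l k = (\<lambda>i j. if i < m \<and> j < n then X i j
       else (i, j) = (l, n) \<or> (i, j) = (m, k) \<or> (i, j) = (m, n))"

end

theory Submission
  imports Defs
begin

text \<open>
  Everything is read off the rectangle cover graph \<open>G\<close> of a matrix: an isolated set is a stable set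
  of \<open>G\<close> and a rectangle cover is a covering by cliques of \<open>G\<close>, so the isolation number and the
  Boolean rank of a submatrix are the clique number and the chromatic number of the complement of
  \<open>G\<close> on the corresponding vertex set. If \<open>X\<close> is superfirm, \<open>G(X)\<close> is perfect and hence, by
  Lovasz's perfect graph theorem, so is its complement.

  Stretching at \<open>(l, k)\<close> adds the vertices \<open>a = (l, n)\<close>, \<open>b = (m, k)\<close> and \<open>c = (m, n)\<close>. The
  neighbours of \<open>c\<close> are among \<open>a\<close>, \<open>b\<close>, \<open>(l, k)\<close>, which form a clique; without \<open>c\<close>, the
  neighbours of \<open>a\<close> lie in row \<open>l\<close> and those of \<open>b\<close> in column \<open>k\<close>. So every submatrix of the
  stretched matrix either is a submatrix of \<open>X\<close> or contains a new vertex whose neighbourhood is a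
  clique, and removing such a vertex together with its neighbourhood costs one colour and one unit of
  clique number in the complement. This gives firmness. If \<open>(l, k)\<close> is a simplicial 1, row \<open>l\<close>
  and column \<open>k\<close> together form a clique of \<open>G\<close>, and an optimal colouring of the old vertices
  extends to \<open>a\<close>, \<open>b\<close>, \<open>c\<close> without new colours, which gives perfection of \<open>G\<close>.
\<close>

section \<open>Cliques and colourings\<close>

definition colouring :: "'v set \<Rightarrow> ('v \<Rightarrow> 'v \<Rightarrow> bool) \<Rightarrow> ('v \<Rightarrow> nat) \<Rightarrow> nat \<Rightarrow> bool" where
  "colouring W E c k \<longleftrightarrow> (\<forall>v\<in>W. c v < k) \<and> (\<forall>u\<in>W. \<forall>v\<in>W. u \<noteq> v \<longrightarrow> E u v \<longrightarrow> c u \<noteq> c v)"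

lemma chromatic_number_eq_Least: "chromatic_number W E = (LEAST k. \<exists>c. colouring W E c k)"
  unfolding chromatic_number_def colouring_def by simp

lemma chromatic_number_le: "colouring W E c k \<Longrightarrow> chromatic_number W E \<le> k"
  unfolding chromatic_number_eq_Least by (rule Least_le) blast

lemma colouring_chromatic_number:
  assumes "finite W"
  obtains c where "colouring W E c (chromatic_number W E)"
proof -
  obtain f n where f: "f ` W = {i::nat. i < n}" "inj_on f W"
    using finite_imp_inj_to_nat_seg[OF assms] by blast
  have "colouring W E f n" unfolding colouring_def using f by (auto dest: inj_onD)
  hence "\<exists>k c. colouring W E c k" by blast
  hence "\<exists>c. colouring W E c (LEAST k. \<exists>c. colouring W E c k)" by (rule LeastI_ex)
  thus ?thesis using that unfolding chromatic_number_eq_Least by blast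
qed

lemma colouring_mono:
  assumes "colouring W E c k" "W' \<subseteq> W" "k \<le> k'"
  shows "colouring W' E c k'"
  using assms unfolding colouring_def by (auto intro: less_le_trans)

lemma finite_clique_cards: "finite W \<Longrightarrow> finite {card K | K. K \<subseteq> W \<and> is_clique E K}"
  by (rule finite_subset[of _ "card ` Pow W"]) auto

lemma card_le_clique_number:
  assumes "finite W" "K \<subseteq> W" "is_clique E K"
  shows "card K \<le> clique_number W E"
  unfolding clique_number_def using finite_clique_cards[OF assms(1)] assms by (intro Max_ge) auto

lemma maximum_clique:
  assumes "finite W"
  obtains K where "K \<subseteq> W" "is_clique E K" "card K = clique_number W E"
proof -
  have "{} \<subseteq> W \<and> is_clique E {}" by (simp add: is_clique_def)
  hence "{card K | K. K \<subseteq> W \<and> is_clique E K} \<noteq> {}" by blast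
  hence "clique_number W E \<in> {card K | K. K \<subseteq> W \<and> is_clique E K}"
    unfolding clique_number_def using finite_clique_cards[OF assms] by (intro Max_in)
  thus ?thesis using that by auto
qed

lemma clique_number_mono:
  assumes "finite W'" "W \<subseteq> W'"
  shows "clique_number W E \<le> clique_number W' E"
proof -
  obtain K where "K \<subseteq> W" "is_clique E K" "card K = clique_number W E"
    using maximum_clique[OF finite_subset[OF assms(2,1)]] by blast
  thus ?thesis using card_le_clique_number[OF assms(1), of K E] assms(2) by auto
qed

lemma is_clique_subset: "is_clique E K \<Longrightarrow> K' \<subseteq> K \<Longrightarrow> is_clique E K'"
  unfolding is_clique_def by blast

lemma is_clique_insert:
  assumes "\<And>u v. E u v = E v u" "is_clique E N" "\<And>u. u \<in> N \<Longrightarrow> u \<noteq> s \<Longrightarrow> E s u"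
  shows "is_clique E (insert s N)"
  using assms unfolding is_clique_def by (metis insert_iff)

lemma card_lt_clique_number:
  assumes "finite W" "insert s N \<subseteq> W" "s \<notin> N" "is_clique E (insert s N)"
  shows "card N < clique_number W E"
  using card_le_clique_number[OF assms(1,2,4)] assms finite_subset[OF _ assms(1), of N] by simp

lemma inj_on_colouring_clique:
  assumes "colouring W E c k" "K \<subseteq> W" "is_clique E K"
  shows "inj_on c K"
  using assms unfolding inj_on_def colouring_def is_clique_def by blast

lemma card_image_colouring_clique:
  assumes "colouring W E c k" "K \<subseteq> W" "is_clique E K"
  shows "card (c ` K) = card K"
  using card_image[OF inj_on_colouring_clique[OF assms]] .

lemma clique_number_le_chromatic_number:
  assumes "finite W"
  shows "clique_number W E \<le> chromatic_number W E"
proof -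
  obtain K where K: "K \<subseteq> W" "is_clique E K" "card K = clique_number W E"
    using maximum_clique[OF assms] by blast
  obtain c where c: "colouring W E c (chromatic_number W E)"
    using colouring_chromatic_number[OF assms] by blast
  have "card K = card (c ` K)" using card_image_colouring_clique[OF c K(1,2)] by simp
  also have "\<dots> \<le> card {..<chromatic_number W E}"
    using c K by (intro card_mono) (auto simp: colouring_def)
  finally show ?thesis using K by simp
qed

lemma maximum_clique_meets_colour_classes:
  assumes "colouring W E c k" "K \<subseteq> W" "is_clique E K" "k \<le> card K" "v \<in> W"
  shows "\<exists>u\<in>K. c u = c v"
proof -
  have "c ` K \<subseteq> {..<k}" using assms(1,2) unfolding colouring_def by auto
  moreover have "k \<le> card (c ` K)" using card_image_colouring_clique[OF assms(1-3)] assms(4) by simp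
  ultimately have "c ` K = {..<k}" by (intro card_seteq) auto
  moreover have "c v < k" using assms(1,5) unfolding colouring_def by auto
  ultimately have "c v \<in> c ` K" by simp
  thus ?thesis by auto
qed

lemma chromatic_number_Un_independent_le:
  assumes "finite W" "\<And>u v. u \<in> I \<Longrightarrow> v \<in> I \<Longrightarrow> u \<noteq> v \<Longrightarrow> \<not> E u v"
  shows "chromatic_number (W \<union> I) E \<le> Suc (chromatic_number W E)"
proof -
  obtain c where c: "colouring W E c (chromatic_number W E)"
    using colouring_chromatic_number[OF assms(1)] by blast
  have "colouring (W \<union> I) E (\<lambda>v. if v \<in> W then c v else chromatic_number W E)
      (Suc (chromatic_number W E))"
    using c assms(2) unfolding colouring_def by (auto simp: less_Suc_eq)
  thus ?thesis by (rule chromatic_number_le)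
qed

lemma free_colour:
  assumes "finite A" "card A < (w::nat)"
  obtains x where "x < w" "x \<notin> A"
proof -
  have "\<not> {..<w} \<subseteq> A"
  proof
    assume "{..<w} \<subseteq> A"
    from card_mono[OF assms(1) this] assms(2) show False by simp
  qed
  thus ?thesis using that by blast
qed

lemma two_free_colours:
  assumes "finite A" "finite B" "A \<subseteq> {..<w}" "B \<subseteq> {..<w}" "card A < w" "card B < w"
    and "A = B \<Longrightarrow> Suc (card A) < w"
  obtains x y where "x < w" "y < w" "x \<notin> A" "y \<notin> B" "x \<noteq> y"
proof (cases "A = B")
  case True
  obtain x where x: "x < w" "x \<notin> A" using free_colour[OF assms(1,5)] .
  obtain y where "y < w" "y \<notin> insert x A"
    using free_colour[of "insert x A" w] assms(1,7) True x by auto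
  thus ?thesis using that x True by blast
next
  case False
  then consider z where "z \<in> B" "z \<notin> A" | z where "z \<in> A" "z \<notin> B" by blast
  thus ?thesis
  proof cases
    case (1 z)
    obtain y where "y < w" "y \<notin> B" using free_colour[OF assms(2,6)] .
    thus ?thesis using that[of z y] 1 assms(4) by blast
  next
    case (2 z)
    obtain x where "x < w" "x \<notin> A" using free_colour[OF assms(1,5)] .
    thus ?thesis using that[of x z] 2 assms(3) by blast
  qed
qed

lemma is_clique_image_iff:
  assumes inj: "inj_on f S" and K: "K \<subseteq> S"
    and adj: "\<And>u v. u \<in> S \<Longrightarrow> v \<in> S \<Longrightarrow> u \<noteq> v \<Longrightarrow> E' u v = E (f u) (f v)"
  shows "is_clique E (f ` K) \<longleftrightarrow> is_clique E' K"
proof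
  assume cl: "is_clique E (f ` K)"
  show "is_clique E' K" unfolding is_clique_def
  proof (intro ballI impI)
    fix u v assume uv: "u \<in> K" "v \<in> K" "u \<noteq> v"
    hence "f u \<noteq> f v" using inj K by (auto dest: inj_onD)
    hence "E (f u) (f v)" using cl uv unfolding is_clique_def by blast
    thus "E' u v" using adj[of u v] uv K by auto
  qed
next
  assume cl: "is_clique E' K"
  show "is_clique E (f ` K)" unfolding is_clique_def
  proof (intro ballI impI)
    fix a b assume ab: "a \<in> f ` K" "b \<in> f ` K" "a \<noteq> b"
    obtain u v where uv: "u \<in> K" "v \<in> K" "a = f u" "b = f v" using ab(1,2) by blast
    hence "u \<noteq> v" using ab(3) by auto
    hence "E' u v" using cl uv unfolding is_clique_def by blast
    thus "E a b" using adj[of u v] uv K \<open>u \<noteq> v\<close> by auto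
  qed
qed

lemma colouring_image_iff:
  assumes inj: "inj_on f S"
    and adj: "\<And>u v. u \<in> S \<Longrightarrow> v \<in> S \<Longrightarrow> u \<noteq> v \<Longrightarrow> E' u v = E (f u) (f v)"
  shows "colouring (f ` S) E c k \<longleftrightarrow> colouring S E' (\<lambda>u. c (f u)) k"
proof
  assume col: "colouring (f ` S) E c k"
  show "colouring S E' (\<lambda>u. c (f u)) k" unfolding colouring_def
  proof (intro conjI ballI impI)
    show "c (f v) < k" if "v \<in> S" for v using col that unfolding colouring_def by simp
    fix u v assume uv: "u \<in> S" "v \<in> S" "u \<noteq> v" "E' u v"
    have "f u \<noteq> f v" using inj uv by (auto dest: inj_onD)
    moreover have "E (f u) (f v)" using adj[OF uv(1-3)] uv(4) by simp
    ultimately show "c (f u) \<noteq> c (f v)" using col uv(1,2) unfolding colouring_def by simp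
  qed
next
  assume col: "colouring S E' (\<lambda>u. c (f u)) k"
  show "colouring (f ` S) E c k" unfolding colouring_def
  proof (intro conjI ballI impI)
    show "c a < k" if "a \<in> f ` S" for a using col that unfolding colouring_def by auto
    fix a b assume ab: "a \<in> f ` S" "b \<in> f ` S" "a \<noteq> b" "E a b"
    obtain u v where uv: "u \<in> S" "v \<in> S" "a = f u" "b = f v" using ab(1,2) by blast
    hence "u \<noteq> v" "E' u v" using ab(3,4) adj[of u v] by auto
    thus "c a \<noteq> c b" using col uv unfolding colouring_def by auto
  qed
qed

lemma clique_number_iso:
  assumes inj: "inj_on f S"
    and adj: "\<And>u v. u \<in> S \<Longrightarrow> v \<in> S \<Longrightarrow> u \<noteq> v \<Longrightarrow> E' u v = E (f u) (f v)"
  shows "clique_number S E' = clique_number (f ` S) E"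
proof -
  have "{card K | K. K \<subseteq> S \<and> is_clique E' K} = {card K | K. K \<subseteq> f ` S \<and> is_clique E K}"
  proof (intro equalityI subsetI)
    fix x assume "x \<in> {card K | K. K \<subseteq> S \<and> is_clique E' K}"
    then obtain K where K: "x = card K" "K \<subseteq> S" "is_clique E' K" by blast
    have "card (f ` K) = card K" using card_image[OF inj_on_subset[OF inj K(2)]] .
    thus "x \<in> {card K | K. K \<subseteq> f ` S \<and> is_clique E K}"
      using K is_clique_image_iff[of f S K E' E, OF inj K(2) adj] by (intro CollectI exI[of _ "f ` K"]) auto
  next
    fix x assume "x \<in> {card K | K. K \<subseteq> f ` S \<and> is_clique E K}"
    then obtain K where K: "x = card K" "K \<subseteq> f ` S" "is_clique E K" by blast
    define K' where "K' = S \<inter> f -` K"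
    have fK': "f ` K' = K" "K' \<subseteq> S" using K(2) unfolding K'_def by auto
    have "card K' = card K" using card_image[OF inj_on_subset[OF inj fK'(2)]] fK'(1) by simp
    thus "x \<in> {card K | K. K \<subseteq> S \<and> is_clique E' K}"
      using K is_clique_image_iff[of f S K' E' E, OF inj fK'(2) adj] fK' by (intro CollectI exI[of _ K']) auto
  qed
  thus ?thesis unfolding clique_number_def by simp
qed

lemma chromatic_number_iso:
  assumes inj: "inj_on f S"
    and adj: "\<And>u v. u \<in> S \<Longrightarrow> v \<in> S \<Longrightarrow> u \<noteq> v \<Longrightarrow> E' u v = E (f u) (f v)"
  shows "chromatic_number S E' = chromatic_number (f ` S) E"
proof -
  have "(\<exists>c. colouring S E' c k) \<longleftrightarrow> (\<exists>c. colouring (f ` S) E c k)" for k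
  proof
    assume "\<exists>c. colouring S E' c k"
    then obtain c where "colouring S E' c k" by blast
    hence "colouring S E' (\<lambda>u. c (the_inv_into S f (f u))) k"
      unfolding colouring_def by (simp add: the_inv_into_f_f[OF inj])
    thus "\<exists>c. colouring (f ` S) E c k"
      using colouring_image_iff[of f S E' E "\<lambda>w. c (the_inv_into S f w)" k, OF inj adj] by auto
  next
    assume "\<exists>c. colouring (f ` S) E c k"
    then obtain c where "colouring (f ` S) E c k" by blast
    thus "\<exists>c. colouring S E' c k" using colouring_image_iff[of f S E' E c k, OF inj adj] by auto
  qed
  thus ?thesis unfolding chromatic_number_eq_Least by simp
qed

section \<open>Lovasz's perfect graph theorem\<close>

lemma perfect_graph_cong:
  assumes "\<And>u v. u \<in> V \<Longrightarrow> v \<in> V \<Longrightarrow> u \<noteq> v \<Longrightarrow> E' u v = E u v"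
  shows "perfect_graph V E' \<longleftrightarrow> perfect_graph V E"
proof -
  have "chromatic_number W E' = chromatic_number W E" "clique_number W E' = clique_number W E"
    if W: "W \<subseteq> V" for W
  proof -
    have "E' u v = E (id u) (id v)" if "u \<in> W" "v \<in> W" "u \<noteq> v" for u v
      using assms[of u v] that subsetD[OF W] by simp
    thus "chromatic_number W E' = chromatic_number W E" "clique_number W E' = clique_number W E"
      using chromatic_number_iso[of id W E' E] clique_number_iso[of id W E' E] by simp_all
  qed
  thus ?thesis unfolding perfect_graph_def by (metis (no_types))
qed

lemma perfect_graphD: "perfect_graph V E \<Longrightarrow> W \<subseteq> V \<Longrightarrow> chromatic_number W E = clique_number W E"
  by (simp add: perfect_graph_def)

lemma is_clique_insert_twin:
  assumes sym: "\<And>u v. E u v = E v u" and K: "is_clique E K" "x \<in> K" "K \<subseteq> S - {x'}"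
    and x: "E x x'" and twin: "\<And>y. y \<in> S \<Longrightarrow> y \<noteq> x \<Longrightarrow> y \<noteq> x' \<Longrightarrow> E x' y = E x y"
  shows "is_clique E (insert x' K)"
proof (rule is_clique_insert[OF sym K(1)])
  fix u assume u: "u \<in> K" "u \<noteq> x'"
  show "E x' u"
  proof (cases "u = x")
    case True thus ?thesis using x sym[of x x'] by simp
  next
    case False
    hence "E x u" using K u unfolding is_clique_def by auto
    thus ?thesis using twin[of u] K(3) u False by auto
  qed
qed

text \<open>A clique of \<open>S - {x'}\<close> of size \<open>clique_number S E\<close> meets every colour class, but meets that
  of \<open>x\<close> outside \<open>x\<close> (otherwise \<open>x'\<close> would extend it); so discarding the rest of that class lowers
  the clique number.\<close>

lemma clique_number_remove_colour_class_lt: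
  assumes fin: "finite S" and sym: "\<And>u v. E u v = E v u"
    and x: "x \<in> S" "x' \<in> S" "x \<noteq> x'" "E x x'"
    and twin: "\<And>y. y \<in> S \<Longrightarrow> y \<noteq> x \<Longrightarrow> y \<noteq> x' \<Longrightarrow> E x' y = E x y"
    and c: "colouring (S - {x'}) E c (clique_number S E)"
  shows "clique_number (S - {x'} - ({v \<in> S - {x'}. c v = c x} - {x})) E < clique_number S E"
    (is "clique_number ?H E < _")
proof (rule ccontr)
  assume "\<not> clique_number ?H E < clique_number S E"
  moreover obtain K where K: "K \<subseteq> ?H" "is_clique E K" "card K = clique_number ?H E"
    using maximum_clique[of ?H] fin by blast
  ultimately have Kw: "clique_number S E \<le> card K" by simp
  have KG: "K \<subseteq> S - {x'}" using K(1) by auto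
  obtain u where "u \<in> K" "c u = c x"
    using maximum_clique_meets_colour_classes[OF c KG K(2) Kw] x by blast
  hence "x \<in> K" using K(1) by auto
  hence "is_clique E (insert x' K)" by (rule is_clique_insert_twin[OF sym K(2) _ KG x(4) twin])
  moreover have "insert x' K \<subseteq> S" "x' \<notin> K" using KG x by auto
  ultimately have "card K < clique_number S E" using card_lt_clique_number[OF fin] by blast
  thus False using Kw by simp
qed

lemma chromatic_eq_clique_number_add_twin:
  assumes fin: "finite S" and sym: "\<And>u v. E u v = E v u"
    and x: "x \<in> S" "x' \<in> S" "x \<noteq> x'" "E x x'"
    and twin: "\<And>y. y \<in> S \<Longrightarrow> y \<noteq> x \<Longrightarrow> y \<noteq> x' \<Longrightarrow> E x' y = E x y"
    and perf: "perfect_graph (S - {x'}) E"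
  shows "chromatic_number S E = clique_number S E"
proof -
  define G where "G = S - {x'}"
  define w where "w = clique_number G E"
  have finG: "finite G" and xG: "x \<in> G" using fin x unfolding G_def by auto
  have perfG: "chromatic_number H E = clique_number H E" if "H \<subseteq> G" for H
    using perfect_graphD[OF perf] that unfolding G_def .
  obtain c where "colouring G E c (chromatic_number G E)"
    using colouring_chromatic_number[OF finG] by blast
  hence c: "colouring G E c w" using perfG[of G] unfolding w_def by simp
  have wS: "w \<le> clique_number S E" unfolding w_def G_def using fin by (intro clique_number_mono) auto
  have "chromatic_number S E \<le> clique_number S E"
  proof (cases "w < clique_number S E")
    case True
    have "S = G \<union> {x'}" using x unfolding G_def by auto
    hence "chromatic_number S E \<le> Suc (chromatic_number G E)"
      using chromatic_number_Un_independent_le[OF finG, of "{x'}" E] by simp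
    thus ?thesis using True perfG[of G] unfolding w_def by simp
  next
    case False
    hence wS: "clique_number S E = w" using wS by simp
    define A where "A = {v \<in> G. c v = c x} - {x}"
    define H where "H = G - A"
    have finH: "finite H" using finG unfolding H_def by simp
    have "clique_number H E < w"
      using clique_number_remove_colour_class_lt[OF fin sym x twin] c wS
      unfolding H_def A_def G_def by simp
    moreover have "chromatic_number S E \<le> Suc (chromatic_number H E)"
    proof -
      have S_eq: "S = H \<union> insert x' A" using x unfolding H_def A_def G_def by auto
      have same_colour: "\<not> E p q" if "p \<in> insert x A" "q \<in> insert x A" "p \<noteq> q" for p q
      proof -
        have "p \<in> G" "q \<in> G" "c p = c q" using that xG unfolding A_def by auto
        thus ?thesis using c that(3) unfolding colouring_def by blast
      qed
      have "x \<notin> A" "x' \<notin> A" unfolding A_def G_def by auto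
      have x'_A: "\<not> E x' p \<and> \<not> E p x'" if "p \<in> A" for p
        using that twin[of p] same_colour[of x p] sym[of p x'] \<open>x \<notin> A\<close> unfolding A_def G_def by auto
      have indep: "\<not> E u v" if "u \<in> insert x' A" "v \<in> insert x' A" "u \<noteq> v" for u v
        using that same_colour[of u v] x'_A[of u] x'_A[of v] by auto
      show ?thesis unfolding S_eq by (rule chromatic_number_Un_independent_le[OF finH indep])
    qed
    moreover have "chromatic_number H E = clique_number H E" using perfG unfolding H_def by auto
    ultimately show ?thesis using wS by simp
  qed
  thus ?thesis using clique_number_le_chromatic_number[OF fin, of E] by simp
qed

text \<open>Replication: every vertex \<open>v\<close> is replaced by the clique of its copies \<open>(v, i)\<close>.\<close>

definition blow_up :: "('v \<Rightarrow> 'v \<Rightarrow> bool) \<Rightarrow> 'v \<times> nat \<Rightarrow> 'v \<times> nat \<Rightarrow> bool" where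
  "blow_up E p q \<longleftrightarrow> fst p = fst q \<or> E (fst p) (fst q)"

lemma chromatic_eq_clique_number_blow_up:
  assumes perf: "perfect_graph V E" and sym: "\<And>u v. E u v = E v u"
    and "finite S" "fst ` S \<subseteq> V"
  shows "chromatic_number S (blow_up E) = clique_number S (blow_up E)"
  using assms(3,4)
proof (induction "card S" arbitrary: S rule: less_induct)
  case less
  show ?case
  proof (cases "inj_on fst S")
    case True
    have adj: "blow_up E u v = E (fst u) (fst v)" if "u \<in> S" "v \<in> S" "u \<noteq> v" for u v
    proof -
      have "fst u \<noteq> fst v" using True that by (auto dest: inj_onD)
      thus ?thesis unfolding blow_up_def by simp
    qed
    have "chromatic_number (fst ` S) E = clique_number (fst ` S) E"
      using perfect_graphD[OF perf less.prems(2)] .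
    thus ?thesis using clique_number_iso[of fst S "blow_up E" E, OF True adj]
        chromatic_number_iso[of fst S "blow_up E" E, OF True adj] by simp
  next
    case False
    then obtain x x' where x: "x \<in> S" "x' \<in> S" "x \<noteq> x'" "fst x = fst x'"
      unfolding inj_on_def by blast
    show ?thesis
    proof (rule chromatic_eq_clique_number_add_twin[OF less.prems(1) _ x(1-3)])
      show "blow_up E u v = blow_up E v u" for u v
        unfolding blow_up_def using sym[of "fst u" "fst v"] by auto
      show "blow_up E x x'" "blow_up E x' y = blow_up E x y" for y
        unfolding blow_up_def using x(4) by simp_all
      have "chromatic_number T (blow_up E) = clique_number T (blow_up E)" if T: "T \<subseteq> S - {x'}" for T
      proof (rule less.hyps)
        show "card T < card S" using T x(2) less.prems(1) by (intro psubset_card_mono) auto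
        show "finite T" using T less.prems(1) by (auto intro: finite_subset)
        show "fst ` T \<subseteq> V" using T less.prems(2) by auto
      qed
      thus "perfect_graph (S - {x'}) (blow_up E)" unfolding perfect_graph_def by simp
    qed
  qed
qed

lemma card_le_chromatic_number_blow_up:
  assumes finS: "finite S" and finW: "finite W" and SW: "fst ` S \<subseteq> W"
  shows "card S \<le> chromatic_number S (blow_up E) * clique_number W (\<lambda>u v. \<not> E u v)"
proof -
  define k where "k = chromatic_number S (blow_up E)"
  define \<alpha> where "\<alpha> = clique_number W (\<lambda>u v. \<not> E u v)"
  obtain c where c: "colouring S (blow_up E) c k"
    using colouring_chromatic_number[OF finS] unfolding k_def by blast
  define B where "B i = {p \<in> S. c p = i}" for i
  have "card (B i) \<le> \<alpha>" for i
  proof -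
    have "\<not> blow_up E p q" if "p \<in> B i" "q \<in> B i" "p \<noteq> q" for p q
    proof -
      have "p \<in> S" "q \<in> S" "c p = c q" using that unfolding B_def by auto
      thus ?thesis using c that(3) unfolding colouring_def by blast
    qed
    hence "inj_on fst (B i)" and "is_clique (\<lambda>u v. \<not> E u v) (fst ` B i)"
      unfolding inj_on_def is_clique_def blow_up_def by auto
    moreover have "fst ` B i \<subseteq> W" using SW unfolding B_def by auto
    ultimately have "card (fst ` B i) \<le> \<alpha>" and "card (fst ` B i) = card (B i)"
      unfolding \<alpha>_def using card_le_clique_number[OF finW] card_image by auto
    thus ?thesis by simp
  qed
  hence "(\<Sum>i<k. card (B i)) \<le> (\<Sum>i<k. \<alpha>)" by (intro sum_mono)
  moreover have "S = (\<Union>i<k. B i)" using c unfolding B_def colouring_def by auto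
  hence "card S \<le> (\<Sum>i<k. card (B i))" using card_UN_le[of "{..<k}" B] by simp
  ultimately show ?thesis unfolding k_def \<alpha>_def by simp
qed

lemma card_Int_clique_complement_le_1:
  assumes "finite A" "is_clique E A" "is_clique (\<lambda>u v. \<not> E u v) B"
  shows "card (A \<inter> B) \<le> 1"
proof -
  have "a = b" if "a \<in> A \<inter> B" "b \<in> A \<inter> B" for a b
    using assms(2,3) that unfolding is_clique_def by blast
  thus ?thesis using assms(1) by (simp add: card_le_Suc0_iff_eq)
qed

lemma sum_count_memberships:
  assumes "finite U"
  shows "(\<Sum>v\<in>U. \<Sum>K\<in>KK. of_bool (v \<in> A K) :: nat) = (\<Sum>K\<in>KK. card (U \<inter> A K))"
proof -
  have "(\<Sum>v\<in>U. \<Sum>K\<in>KK. of_bool (v \<in> A K) :: nat) = (\<Sum>K\<in>KK. \<Sum>v\<in>U. of_bool (v \<in> A K))"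
    by (rule sum.swap)
  also have "\<dots> = (\<Sum>K\<in>KK. card (U \<inter> A K))" using assms by (intro sum.cong refl) simp
  finally show ?thesis .
qed

lemma clique_number_blow_up_le:
  assumes finW: "finite W"
    and Af: "\<And>K. K \<subseteq> W \<Longrightarrow> is_clique E K \<Longrightarrow> is_clique (\<lambda>u v. \<not> E u v) (Af K) \<and> Af K \<inter> K = {}"
    and KK_def: "KK = {K. K \<subseteq> W \<and> is_clique E K}"
    and h_def: "h = (\<lambda>v. \<Sum>K\<in>KK. of_bool (v \<in> Af K) :: nat)"
  shows "clique_number (Sigma W (\<lambda>v. {..<h v})) (blow_up E) \<le> card KK - 1"
proof -
  define S where "S = Sigma W (\<lambda>v. {..<h v})"
  have finS: "finite S" unfolding S_def using finW by auto
  have finKK: "finite KK" unfolding KK_def by (rule finite_subset[of _ "Pow W"]) (auto simp: finW)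
  obtain C where C: "C \<subseteq> S" "is_clique (blow_up E) C" "card C = clique_number S (blow_up E)"
    using maximum_clique[OF finS] by blast
  define K where "K = fst ` C"
  have KW: "K \<subseteq> W" using C unfolding K_def S_def by auto
  have Kcl: "is_clique E K" unfolding is_clique_def
  proof (intro ballI impI)
    fix v w assume vw: "v \<in> K" "w \<in> K" "v \<noteq> w"
    then obtain p p' where "p \<in> C" "p' \<in> C" "fst p = v" "fst p' = w" unfolding K_def by blast
    moreover hence "p \<noteq> p'" using vw by auto
    ultimately show "E v w" using C(2) vw unfolding is_clique_def blow_up_def by auto
  qed
  have K: "K \<in> KK" using KW Kcl unfolding KK_def by auto
  have finK: "finite K" using finW KW by (rule finite_subset[rotated])
  have "C \<subseteq> Sigma K (\<lambda>v. {..<h v})" using C unfolding K_def S_def by force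
  hence "card C \<le> card (Sigma K (\<lambda>v. {..<h v}))" using finK by (intro card_mono) auto
  also have "\<dots> = (\<Sum>v\<in>K. h v)" using finK by simp
  also have "\<dots> = (\<Sum>K'\<in>KK. card (K \<inter> Af K'))" unfolding h_def by (rule sum_count_memberships[OF finK])
  also have "\<dots> = card (K \<inter> Af K) + (\<Sum>K'\<in>KK - {K}. card (K \<inter> Af K'))"
    using finKK K by (rule sum.remove)
  also have "\<dots> \<le> 0 + (\<Sum>K'\<in>KK - {K}. 1)"
  proof (intro add_mono sum_mono)
    show "card (K \<inter> Af K) \<le> 0" using Af[OF KW Kcl] by (simp add: Int_commute)
  next
    fix K' assume "K' \<in> KK - {K}"
    hence "is_clique (\<lambda>u v. \<not> E u v) (Af K')" using Af unfolding KK_def by auto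
    thus "card (K \<inter> Af K') \<le> 1" by (rule card_Int_clique_complement_le_1[OF finK Kcl])
  qed
  also have "\<dots> = card KK - 1" using finKK K by simp
  finally show ?thesis using C(3) unfolding S_def by simp
qed

text \<open>If every clique missed some maximum stable set, replicating each vertex once for each of the
  chosen stable sets containing it would produce a graph with too many vertices to be coloured with
  as few colours as its clique number.\<close>

lemma clique_meeting_maximum_stable_sets:
  assumes fin: "finite V" and perf: "perfect_graph V E" and sym: "\<And>u v. E u v = E v u"
    and W: "W \<subseteq> V" "W \<noteq> {}"
  shows "\<exists>K \<subseteq> W. is_clique E K \<and> (\<forall>A \<subseteq> W. is_clique (\<lambda>u v. \<not> E u v) A \<longrightarrow>
      card A = clique_number W (\<lambda>u v. \<not> E u v) \<longrightarrow> A \<inter> K \<noteq> {})"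
proof (rule ccontr)
  let ?F = "\<lambda>u v. \<not> E u v"
  define \<alpha> where "\<alpha> = clique_number W ?F"
  assume "\<not> ?thesis"
  hence "\<forall>K. \<exists>A. K \<subseteq> W \<and> is_clique E K \<longrightarrow> A \<subseteq> W \<and> is_clique ?F A \<and> card A = \<alpha> \<and> A \<inter> K = {}"
    unfolding \<alpha>_def by blast
  from choice[OF this] obtain Af where Af0: "\<forall>K. K \<subseteq> W \<and> is_clique E K \<longrightarrow>
      Af K \<subseteq> W \<and> is_clique ?F (Af K) \<and> card (Af K) = \<alpha> \<and> Af K \<inter> K = {}"
    by blast
  have Af: "\<And>K. K \<subseteq> W \<Longrightarrow> is_clique E K \<Longrightarrow>
      Af K \<subseteq> W \<and> is_clique ?F (Af K) \<and> card (Af K) = \<alpha> \<and> Af K \<inter> K = {}"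
    using Af0 by blast
  define KK where "KK = {K. K \<subseteq> W \<and> is_clique E K}"
  define q where "q = card KK"
  define h where "h = (\<lambda>v. \<Sum>K\<in>KK. of_bool (v \<in> Af K) :: nat)"
  define S where "S = Sigma W (\<lambda>v. {..<h v})"
  have finW: "finite W" using W(1) fin by (rule finite_subset)
  have finKK: "finite KK" unfolding KK_def by (rule finite_subset[of _ "Pow W"]) (auto simp: finW)
  have "{} \<in> KK" unfolding KK_def is_clique_def by auto
  hence q1: "q \<ge> 1" unfolding q_def using finKK by (auto simp: Suc_le_eq card_gt_0_iff)
  obtain w where "w \<in> W" using W(2) by blast
  have "card {w} \<le> \<alpha>" unfolding \<alpha>_def using finW \<open>w \<in> W\<close>
    by (intro card_le_clique_number) (auto simp: is_clique_def)
  hence \<alpha>1: "\<alpha> \<ge> 1" by simp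
  have finS: "finite S" unfolding S_def using finW by auto
  have SV: "fst ` S \<subseteq> V" and SW: "fst ` S \<subseteq> W" using W(1) unfolding S_def by auto
  have "card S = (\<Sum>v\<in>W. h v)" unfolding S_def using finW by simp
  also have "\<dots> = (\<Sum>K\<in>KK. card (W \<inter> Af K))" unfolding h_def by (rule sum_count_memberships[OF finW])
  also have "\<dots> = (\<Sum>K\<in>KK. \<alpha>)"
  proof (intro sum.cong refl)
    fix K assume "K \<in> KK"
    hence "Af K \<subseteq> W" "card (Af K) = \<alpha>" using Af unfolding KK_def by auto
    thus "card (W \<inter> Af K) = \<alpha>" by (simp add: Int_absorb1)
  qed
  finally have cardS: "card S = q * \<alpha>" unfolding q_def by simp
  have "card S \<le> clique_number S (blow_up E) * \<alpha>"
    using card_le_chromatic_number_blow_up[OF finS finW SW, of E]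
      chromatic_eq_clique_number_blow_up[OF perf sym finS SV] unfolding \<alpha>_def by simp
  also have "\<dots> \<le> (q - 1) * \<alpha>"
  proof (rule mult_le_mono1)
    show "clique_number S (blow_up E) \<le> q - 1"
      unfolding S_def q_def by (rule clique_number_blow_up_le[OF finW _ KK_def h_def]) (use Af in blast)
  qed
  finally have "q * \<alpha> \<le> (q - 1) * \<alpha>" using cardS by simp
  thus False using q1 \<alpha>1 by (simp add: mult_le_cancel2)
qed

theorem perfect_graph_complement:
  assumes fin: "finite V" and perf: "perfect_graph V E" and sym: "\<And>u v. E u v = E v u"
  shows "perfect_graph V (\<lambda>u v. \<not> E u v)"
  unfolding perfect_graph_def
proof (intro allI impI)
  let ?F = "\<lambda>u v. \<not> E u v"
  fix W assume "W \<subseteq> V"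
  thus "chromatic_number W ?F = clique_number W ?F"
  proof (induction "card W" arbitrary: W rule: less_induct)
    case less
    have finW: "finite W" using less.prems fin by (rule finite_subset)
    have "chromatic_number W ?F \<le> clique_number W ?F"
    proof (cases "W = {}")
      case True
      have "colouring W ?F (\<lambda>_. 0) 0" using True unfolding colouring_def by simp
      from chromatic_number_le[OF this] show ?thesis by simp
    next
      case False
      then obtain K where K: "K \<subseteq> W" "is_clique E K"
        "\<And>A. A \<subseteq> W \<Longrightarrow> is_clique ?F A \<Longrightarrow> card A = clique_number W ?F \<Longrightarrow> A \<inter> K \<noteq> {}"
        using clique_meeting_maximum_stable_sets[OF fin perf sym less.prems] by blast
      obtain A0 where "A0 \<subseteq> W" "is_clique ?F A0" "card A0 = clique_number W ?F"
        using maximum_clique[OF finW] by blast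
      hence "K \<noteq> {}" using K(3) by auto
      hence "card (W - K) < card W" using K(1) finW by (intro psubset_card_mono) auto
      moreover have "W - K \<subseteq> V" using less.prems by auto
      ultimately have IH: "chromatic_number (W - K) ?F = clique_number (W - K) ?F" by (rule less.hyps)
      have "clique_number (W - K) ?F < clique_number W ?F"
      proof -
        obtain A where A: "A \<subseteq> W - K" "is_clique ?F A" "card A = clique_number (W - K) ?F"
          using maximum_clique[of "W - K"] finW by blast
        have "A \<subseteq> W" using A(1) by auto
        hence "card A \<le> clique_number W ?F" using card_le_clique_number[OF finW _ A(2)] by simp
        moreover have "card A \<noteq> clique_number W ?F" using K(3)[OF \<open>A \<subseteq> W\<close> A(2)] A(1) by auto
        ultimately show ?thesis using A(3) by simp
      qed
      moreover have "chromatic_number W ?F \<le> Suc (chromatic_number (W - K) ?F)"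
      proof -
        have indep: "\<not> ?F u v" if "u \<in> K" "v \<in> K" "u \<noteq> v" for u v
          using K(2) that unfolding is_clique_def by simp
        have "W = (W - K) \<union> K" using K(1) by auto
        thus ?thesis using chromatic_number_Un_independent_le[of "W - K" K ?F, OF _ indep] finW by simp
      qed
      ultimately show ?thesis using IH by simp
    qed
    thus ?case using clique_number_le_chromatic_number[OF finW, of ?F] by simp
  qed
qed

section \<open>Adding vertices to perfect graphs\<close>

lemma chromatic_eq_clique_number_complement_simplicial:
  assumes fin: "finite W" and s: "s \<in> W" and sym: "\<And>u v. E u v = E v u"
    and simplicial: "is_clique E {u \<in> W. E s u}"
    and rest: "chromatic_number {u \<in> W. u \<noteq> s \<and> \<not> E s u} (\<lambda>u v. \<not> E u v)
      = clique_number {u \<in> W. u \<noteq> s \<and> \<not> E s u} (\<lambda>u v. \<not> E u v)"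
  shows "chromatic_number W (\<lambda>u v. \<not> E u v) = clique_number W (\<lambda>u v. \<not> E u v)"
proof -
  let ?F = "\<lambda>u v. \<not> E u v"
  define U where "U = {u \<in> W. u \<noteq> s \<and> \<not> E s u}"
  define N where "N = {u \<in> W. E s u}"
  have finU: "finite U" using fin unfolding U_def by simp
  obtain K where K: "K \<subseteq> U" "is_clique ?F K" "card K = clique_number U ?F"
    using maximum_clique[OF finU] by blast
  have "is_clique ?F (insert s K)"
  proof (rule is_clique_insert)
    show "?F s u" if "u \<in> K" "u \<noteq> s" for u using that K(1) unfolding U_def by auto
  qed (use K(2) sym in auto)
  moreover have "insert s K \<subseteq> W" "s \<notin> K" using K(1) s unfolding U_def by auto
  ultimately have "clique_number U ?F < clique_number W ?F"
    using card_lt_clique_number[OF fin] K(3) by metis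
  moreover have "chromatic_number W ?F \<le> Suc (chromatic_number U ?F)"
  proof -
    have "W = U \<union> insert s N" using s unfolding U_def N_def by auto
    moreover have "is_clique E (insert s N)"
      using is_clique_insert[OF sym simplicial] unfolding N_def by simp
    hence "\<not> ?F u v" if "u \<in> insert s N" "v \<in> insert s N" "u \<noteq> v" for u v
      using that unfolding is_clique_def by blast
    ultimately show ?thesis using chromatic_number_Un_independent_le[OF finU] by metis
  qed
  ultimately have "chromatic_number W ?F \<le> clique_number W ?F" using rest unfolding U_def by simp
  thus ?thesis using clique_number_le_chromatic_number[OF fin, of ?F] by simp
qed

lemma colouring_insert:
  assumes c: "colouring W E c k" and sym: "\<And>u w. E u w = E w u"
    and fin: "finite W" and bound: "card (c ` {u \<in> W. E v u}) < k"
  obtains c' where "colouring (insert v W) E c' k"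
proof -
  obtain x where x: "x < k" "x \<notin> c ` {u \<in> W. E v u}"
    using free_colour[OF _ bound] fin by auto
  show thesis
  proof (cases "v \<in> W")
    case True
    thus thesis using that c by (simp add: insert_absorb)
  next
    case False
    have "colouring (insert v W) E (c(v := x)) k" unfolding colouring_def
    proof (intro conjI ballI impI)
      show "(c(v := x)) u < k" if "u \<in> insert v W" for u using c x that unfolding colouring_def by auto
      fix u w assume uw: "u \<in> insert v W" "w \<in> insert v W" "u \<noteq> w" "E u w"
      consider "u \<in> W" "w \<in> W" | "u = v" "w \<in> W" | "u \<in> W" "w = v" using uw by auto
      thus "(c(v := x)) u \<noteq> (c(v := x)) w"
      proof cases
        case 1 thus ?thesis using c uw False unfolding colouring_def by auto
      next
        case 2 thus ?thesis using x uw False by auto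
      next
        case 3 thus ?thesis using x uw False sym[of u w] by auto
      qed
    qed
    thus thesis by (rule that)
  qed
qed

lemma colouring_insert2:
  assumes c: "colouring W E c k" and sym: "\<And>u w. E u w = E w u" and fin: "finite W"
    and ab: "a \<notin> W" "b \<notin> W" "a \<noteq> b"
    and bound_a: "card (c ` {u \<in> W. E a u}) < k" and bound_b: "card (c ` {u \<in> W. E b u}) < k"
    and same: "c ` {u \<in> W. E a u} = c ` {u \<in> W. E b u} \<Longrightarrow> Suc (card (c ` {u \<in> W. E a u})) < k"
  obtains c' where "colouring (W \<union> {a, b}) E c' k"
proof -
  have range: "c ` U \<subseteq> {..<k}" if "U \<subseteq> W" for U using c that unfolding colouring_def by auto
  obtain x y where xy: "x < k" "y < k" "x \<notin> c ` {u \<in> W. E a u}" "y \<notin> c ` {u \<in> W. E b u}" "x \<noteq> y"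
    using two_free_colours[OF _ _ range range bound_a bound_b same] fin by auto
  have "colouring (W \<union> {a, b}) E (c(a := x, b := y)) k" unfolding colouring_def
  proof (intro conjI ballI impI)
    show "(c(a := x, b := y)) u < k" if "u \<in> W \<union> {a, b}" for u
      using c xy that unfolding colouring_def by auto
    fix u w assume uw: "u \<in> W \<union> {a, b}" "w \<in> W \<union> {a, b}" "u \<noteq> w" "E u w"
    consider "u \<in> W" "w \<in> W" | "u \<in> {a, b}" "w \<in> W" | "u \<in> W" "w \<in> {a, b}" | "u \<in> {a, b}" "w \<in> {a, b}"
      using uw by auto
    thus "(c(a := x, b := y)) u \<noteq> (c(a := x, b := y)) w"
    proof cases
      case 1 thus ?thesis using c uw ab unfolding colouring_def by auto
    next
      case 2 thus ?thesis using xy uw ab by auto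
    next
      case 3 thus ?thesis using xy uw ab sym[of u w] by auto
    next
      case 4 thus ?thesis using xy uw ab by auto
    qed
  qed
  thus thesis by (rule that)
qed

lemma card_image_neighbours_lt_clique_number:
  assumes fin: "finite W" and sym: "\<And>u v. E u v = E v u"
    and v: "W0 \<subseteq> W" "v \<in> W" "v \<notin> W0" and cl: "is_clique E {u \<in> W0. E v u}"
  shows "card (f ` {u \<in> W0. E v u}) < clique_number W E"
proof -
  have "is_clique E (insert v {u \<in> W0. E v u})" by (rule is_clique_insert[OF sym cl]) simp
  moreover have "insert v {u \<in> W0. E v u} \<subseteq> W" "v \<notin> {u \<in> W0. E v u}" using v by auto
  ultimately have "card {u \<in> W0. E v u} < clique_number W E"
    using card_lt_clique_number[OF fin] by blast
  moreover have "finite {u \<in> W0. E v u}" using fin v(1) by (auto intro: finite_subset)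
  ultimately show ?thesis using card_image_le[of "{u \<in> W0. E v u}" f] by simp
qed

lemma colouring_insert_adjacent_pair:
  assumes fin: "finite W" and sym: "\<And>u v. E u v = E v u"
    and c0: "colouring W0 E c0 (clique_number W E)"
    and W0: "W0 \<union> {a, b} \<subseteq> W" "a \<notin> W0" "b \<notin> W0" and ab: "a \<noteq> b" "E a b"
    and Nab: "is_clique E ({u \<in> W0. E a u} \<union> {u \<in> W0. E b u})"
  obtains c1 where "colouring (W0 \<union> {a, b}) E c1 (clique_number W E)"
proof -
  let ?w = "clique_number W E" and ?Na = "{u \<in> W0. E a u}" and ?Nb = "{u \<in> W0. E b u}"
  have finW0: "finite W0" using fin W0(1) by (auto intro: finite_subset)
  have Na_cl: "is_clique E ?Na" and Nb_cl: "is_clique E ?Nb" using is_clique_subset[OF Nab] by simp_all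
  have "Suc (card (c0 ` ?Na)) < ?w" if eq: "c0 ` ?Na = c0 ` ?Nb"
  proof -
    txt \<open>\<open>c0\<close> is injective on the clique \<open>?Na \<union> ?Nb\<close>, so \<open>a\<close> and \<open>b\<close> see the same colours
      only if they have the same neighbours, and then these form a clique together with \<open>a\<close>
      and \<open>b\<close>.\<close>
    have "inj_on c0 (?Na \<union> ?Nb)" by (rule inj_on_colouring_clique[OF c0 _ Nab]) auto
    hence same: "?Na = ?Nb" using eq by (subst (asm) inj_on_image_eq_iff) auto
    have "is_clique E (insert b ?Na)" by (rule is_clique_insert[OF sym Na_cl]) (use same in auto)
    hence cl: "is_clique E (insert a (insert b ?Na))" by (rule is_clique_insert[OF sym]) (use ab in auto)
    have sub: "insert a (insert b ?Na) \<subseteq> W" and "a \<notin> insert b ?Na" "b \<notin> ?Na"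
      using W0 ab by auto
    have "card (insert b ?Na) < ?w" by (rule card_lt_clique_number[OF fin sub \<open>a \<notin> insert b ?Na\<close> cl])
    hence "Suc (card ?Na) < ?w" using \<open>b \<notin> ?Na\<close> finW0 by simp
    moreover have "card (c0 ` ?Na) = card ?Na" by (rule card_image_colouring_clique[OF c0 _ Na_cl]) auto
    ultimately show ?thesis by simp
  qed
  moreover have "card (c0 ` ?Na) < ?w" "card (c0 ` ?Nb) < ?w"
    using card_image_neighbours_lt_clique_number[OF fin sym] W0 Na_cl Nb_cl by auto
  ultimately show thesis using colouring_insert2[OF c0 sym finW0 W0(2,3) ab(1)] that by blast
qed

lemma chromatic_le_clique_number_add_three:
  assumes fin: "finite W" and sym: "\<And>u v. E u v = E v u"
    and dist: "a \<noteq> b" "a \<noteq> c" "b \<noteq> c" and ab: "E a b"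
    and perf0: "chromatic_number (W - {a, b, c}) E = clique_number (W - {a, b, c}) E"
    and Nab: "is_clique E ({u \<in> W - {a, b, c}. E a u} \<union> {u \<in> W - {a, b, c}. E b u})"
    and Nc: "is_clique E {u \<in> W. E c u}"
  shows "chromatic_number W E \<le> clique_number W E"
proof -
  define w where "w = clique_number W E"
  define W0 where "W0 = W - {a, b, c}"
  have finW0: "finite W0" using fin unfolding W0_def by simp
  have W0: "W0 \<subseteq> W" "a \<notin> W0" "b \<notin> W0" unfolding W0_def by auto
  obtain c0 where c0: "colouring W0 E c0 (chromatic_number W0 E)"
    using colouring_chromatic_number[OF finW0] by blast
  have "chromatic_number W0 E \<le> w"
    using perf0 clique_number_mono[OF fin] unfolding w_def W0_def by simp
  with c0 have c0: "colouring W0 E c0 w" by (rule colouring_mono[OF _ order_refl])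
  have Nab: "is_clique E ({u \<in> W0. E a u} \<union> {u \<in> W0. E b u})" using Nab unfolding W0_def .
  hence Na: "is_clique E {u \<in> W0. E a u}" and Nb: "is_clique E {u \<in> W0. E b u}"
    using is_clique_subset by auto
  have "\<exists>c1. colouring (W - {c}) E c1 w"
  proof (cases "a \<in> W"; cases "b \<in> W")
    assume "a \<in> W" "b \<in> W"
    hence "W - {c} = W0 \<union> {a, b}" and sub: "W0 \<union> {a, b} \<subseteq> W"
      using dist W0(1) unfolding W0_def by auto
    thus ?thesis using colouring_insert_adjacent_pair[OF fin sym c0[unfolded w_def] sub W0(2,3) dist(1) ab Nab]
      unfolding w_def by metis
  next
    assume aW: "a \<in> W" and "b \<notin> W"
    hence "W - {c} = insert a W0" using dist unfolding W0_def by auto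
    thus ?thesis using colouring_insert[OF c0 sym finW0] card_image_neighbours_lt_clique_number[OF fin sym W0(1) aW W0(2) Na]
      unfolding w_def by metis
  next
    assume bW: "b \<in> W" and "a \<notin> W"
    hence "W - {c} = insert b W0" using dist unfolding W0_def by auto
    thus ?thesis using colouring_insert[OF c0 sym finW0] card_image_neighbours_lt_clique_number[OF fin sym W0(1) bW W0(3) Nb]
      unfolding w_def by metis
  next
    assume "a \<notin> W" "b \<notin> W"
    hence "W - {c} = W0" unfolding W0_def by auto
    thus ?thesis using c0 by auto
  qed
  then obtain c1 where c1: "colouring (W - {c}) E c1 w" by blast
  have "\<exists>c2. colouring W E c2 w"
  proof (cases "c \<in> W")
    case True
    have cl: "is_clique E {u \<in> W - {c}. E c u}" by (rule is_clique_subset[OF Nc]) auto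
    have "card (c1 ` {u \<in> W - {c}. E c u}) < w"
      unfolding w_def by (rule card_image_neighbours_lt_clique_number[OF fin sym _ True _ cl]) auto
    then obtain c2 where "colouring (insert c (W - {c})) E c2 w"
      using colouring_insert[OF c1 sym] fin by blast
    moreover have "insert c (W - {c}) = W" using True by auto
    ultimately show ?thesis by auto
  next
    case False
    thus ?thesis using c1 by auto
  qed
  thus ?thesis using chromatic_number_le unfolding w_def by blast
qed

section \<open>Rectangle cover graphs\<close>

lemma finite_supp: "finite (supp m n X)"
  by (rule finite_subset[of _ "{..<m} \<times> {..<n}"]) (auto simp: supp_def)

lemma rc_adj_iff:
  assumes "p \<in> supp m n X" "q \<in> supp m n X"
  shows "rc_adj m n X p q \<longleftrightarrow> p \<noteq> q \<and> X (fst p) (snd q) \<and> X (fst q) (snd p)"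
proof -
  obtain i j i' j' where pq: "p = (i, j)" "q = (i', j')" by (cases p, cases q) auto
  have b: "i < m" "j < n" "X i j" "i' < m" "j' < n" "X i' j'" using assms pq by (auto simp: supp_def)
  show ?thesis
  proof
    assume "rc_adj m n X p q"
    then obtain I J where "p \<noteq> q" "I \<times> J \<subseteq> supp m n X" "p \<in> I \<times> J" "q \<in> I \<times> J"
      unfolding rc_adj_def is_rectangle_def by blast
    hence "(i, j') \<in> supp m n X" "(i', j) \<in> supp m n X" "p \<noteq> q" using pq by auto
    thus "p \<noteq> q \<and> X (fst p) (snd q) \<and> X (fst q) (snd p)" using pq by (auto simp: supp_def)
  next
    assume a: "p \<noteq> q \<and> X (fst p) (snd q) \<and> X (fst q) (snd p)"
    have "{i, i'} \<times> {j, j'} \<subseteq> supp m n X" using a b pq by (auto simp: supp_def)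
    hence "is_rectangle m n X ({i, i'} \<times> {j, j'})" unfolding is_rectangle_def by blast
    thus "rc_adj m n X p q" unfolding rc_adj_def using a pq by blast
  qed
qed

lemma rc_adj_commute: "rc_adj m n X p q = rc_adj m n X q p"
  unfolding rc_adj_def by blast

lemma rc_adj_same_row:
  assumes "p \<in> supp m n X" "q \<in> supp m n X" "p \<noteq> q" "fst p = fst q"
  shows "rc_adj m n X p q"
  using assms rc_adj_iff[OF assms(1,2)] by (auto simp: supp_def)

lemma rc_adj_same_column:
  assumes "p \<in> supp m n X" "q \<in> supp m n X" "p \<noteq> q" "snd p = snd q"
  shows "rc_adj m n X p q"
  using assms rc_adj_iff[OF assms(1,2)] by (auto simp: supp_def)

lemma is_clique_row:
  assumes "K \<subseteq> supp m n X" "\<And>u. u \<in> K \<Longrightarrow> fst u = i"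
  shows "is_clique (rc_adj m n X) K"
  unfolding is_clique_def
proof (intro ballI impI)
  fix u v assume "u \<in> K" "v \<in> K" "u \<noteq> v"
  thus "rc_adj m n X u v" using assms by (intro rc_adj_same_row) auto
qed

lemma is_clique_column:
  assumes "K \<subseteq> supp m n X" "\<And>u. u \<in> K \<Longrightarrow> snd u = j"
  shows "is_clique (rc_adj m n X) K"
  unfolding is_clique_def
proof (intro ballI impI)
  fix u v assume "u \<in> K" "v \<in> K" "u \<noteq> v"
  thus "rc_adj m n X u v" using assms by (intro rc_adj_same_column) auto
qed

lemma isol_num_eq_clique_number:
  "isol_num m n X = clique_number (supp m n X) (\<lambda>u v. \<not> rc_adj m n X u v)"
proof -
  have "isolated_set m n X S \<longleftrightarrow> S \<subseteq> supp m n X \<and> is_clique (\<lambda>u v. \<not> rc_adj m n X u v) S" for S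
    unfolding isolated_set_def is_clique_def rc_adj_def by blast
  thus ?thesis unfolding isol_num_def clique_number_def by simp
qed

lemma rectangle_of_pairwise_rc_adj:
  assumes "K \<subseteq> supp m n X" "\<And>u v. u \<in> K \<Longrightarrow> v \<in> K \<Longrightarrow> u \<noteq> v \<Longrightarrow> rc_adj m n X u v"
  shows "fst ` K \<times> snd ` K \<subseteq> supp m n X"
proof
  fix x assume "x \<in> fst ` K \<times> snd ` K"
  then obtain p q where pq: "p \<in> K" "q \<in> K" "x = (fst p, snd q)" by auto
  show "x \<in> supp m n X"
  proof (cases "p = q")
    case True thus ?thesis using pq assms(1) by auto
  next
    case False
    hence "X (fst p) (snd q)" using assms pq rc_adj_iff[of p m n X q] by auto
    thus ?thesis using pq assms(1) by (auto simp: supp_def)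
  qed
qed

lemma boolean_rank_le_chromatic_number:
  "boolean_rank m n X \<le> chromatic_number (supp m n X) (\<lambda>u v. \<not> rc_adj m n X u v)"
proof -
  let ?F = "\<lambda>u v. \<not> rc_adj m n X u v"
  define k where "k = chromatic_number (supp m n X) ?F"
  obtain c where c: "colouring (supp m n X) ?F c k"
    using colouring_chromatic_number[OF finite_supp] unfolding k_def by blast
  define C where "C i = {v \<in> supp m n X. c v = i}" for i
  define F where "F = (\<lambda>i. fst ` C i \<times> snd ` C i) ` {..<k}"
  have rect: "fst ` C i \<times> snd ` C i \<subseteq> supp m n X" for i
  proof (rule rectangle_of_pairwise_rc_adj)
    show "C i \<subseteq> supp m n X" unfolding C_def by auto
    fix u v assume uv: "u \<in> C i" "v \<in> C i" "u \<noteq> v"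
    hence "u \<in> supp m n X" "v \<in> supp m n X" "c u = c v" unfolding C_def by auto
    thus "rc_adj m n X u v" using c uv(3) unfolding colouring_def by blast
  qed
  have "\<Union>F = supp m n X"
  proof
    show "\<Union>F \<subseteq> supp m n X" using rect unfolding F_def by blast
    show "supp m n X \<subseteq> \<Union>F"
    proof
      fix v assume v: "v \<in> supp m n X"
      hence "v \<in> C (c v)" "c v < k" using c unfolding C_def colouring_def by auto
      hence "v \<in> fst ` C (c v) \<times> snd ` C (c v)" "c v < k" by (auto simp: mem_Times_iff)
      thus "v \<in> \<Union>F" unfolding F_def by blast
    qed
  qed
  moreover have "finite F" unfolding F_def by simp
  moreover have "\<forall>R\<in>F. is_rectangle m n X R" using rect unfolding F_def is_rectangle_def by blast
  ultimately have "boolean_rank m n X \<le> card F" unfolding boolean_rank_def by (intro Least_le) blast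
  also have "card F \<le> k" unfolding F_def by (rule order.trans[OF card_image_le]) auto
  finally show ?thesis unfolding k_def .
qed

lemma chromatic_number_le_boolean_rank:
  "chromatic_number (supp m n X) (\<lambda>u v. \<not> rc_adj m n X u v) \<le> boolean_rank m n X"
proof -
  let ?F = "\<lambda>u v. \<not> rc_adj m n X u v"
  let ?P = "\<lambda>k. \<exists>F. finite F \<and> card F = k \<and> (\<forall>R\<in>F. is_rectangle m n X R) \<and> \<Union>F = supp m n X"
  have "is_rectangle m n X {p}" if "p \<in> supp m n X" for p
    unfolding is_rectangle_def
    by (intro exI[of _ "{fst p}"] exI[of _ "{snd p}"]) (use that in \<open>cases p, auto\<close>)
  hence "?P (card ((\<lambda>p. {p}) ` supp m n X))"
  proof (intro exI conjI)
    show "finite ((\<lambda>p. {p}) ` supp m n X)" using finite_supp by simp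
    show "\<Union>((\<lambda>p. {p}) ` supp m n X) = supp m n X" by blast
  qed (rule refl, blast)
  hence "?P (boolean_rank m n X)" unfolding boolean_rank_def by (rule LeastI)
  then obtain F where F: "finite F" "card F = boolean_rank m n X" "\<forall>R\<in>F. is_rectangle m n X R"
    "\<Union>F = supp m n X" by blast
  obtain g where g: "bij_betw g {0..<card F} F" using ex_bij_betw_nat_finite[OF F(1)] by blast
  define c where "c v = (LEAST i. i < card F \<and> v \<in> g i)" for v
  have cv: "c v < card F \<and> v \<in> g (c v)" if "v \<in> supp m n X" for v
  proof -
    have "v \<in> \<Union>F" using that F(4) by simp
    then obtain R where "R \<in> F" "v \<in> R" by blast
    hence "R \<in> g ` {0..<card F}" using g unfolding bij_betw_def by simp
    then obtain i where "i < card F" "g i = R" by auto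
    hence "i < card F \<and> v \<in> g i" using \<open>v \<in> R\<close> by simp
    thus ?thesis unfolding c_def by (rule LeastI)
  qed
  have "colouring (supp m n X) ?F c (card F)" unfolding colouring_def
  proof (intro conjI ballI impI)
    show "c v < card F" if "v \<in> supp m n X" for v using cv[OF that] by blast
    fix u v assume uv: "u \<in> supp m n X" "v \<in> supp m n X" "u \<noteq> v" "\<not> rc_adj m n X u v"
    show "c u \<noteq> c v"
    proof
      assume e: "c u = c v"
      have "c u \<in> {0..<card F}" using cv[OF uv(1)] by simp
      hence "g (c u) \<in> F" using g unfolding bij_betw_def by blast
      hence "is_rectangle m n X (g (c u))" using F(3) by blast
      moreover have "u \<in> g (c u)" using cv[OF uv(1)] by blast
      moreover have "v \<in> g (c u)" using cv[OF uv(2)] e by simp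
      ultimately show False using uv unfolding rc_adj_def by blast
    qed
  qed
  from chromatic_number_le[OF this] F(2) show ?thesis by simp
qed

lemma boolean_rank_eq_chromatic_number:
  "boolean_rank m n X = chromatic_number (supp m n X) (\<lambda>u v. \<not> rc_adj m n X u v)"
  using boolean_rank_le_chromatic_number chromatic_number_le_boolean_rank by (rule antisym)

definition submatrix_pos :: "nat set \<Rightarrow> nat set \<Rightarrow> nat \<times> nat \<Rightarrow> nat \<times> nat" where
  "submatrix_pos I J p = (sorted_list_of_set I ! fst p, sorted_list_of_set J ! snd p)"

lemma inj_on_submatrix_pos: "inj_on (submatrix_pos I J) (supp (card I) (card J) (submatrix X I J))"
proof
  fix u v assume uv: "u \<in> supp (card I) (card J) (submatrix X I J)" "v \<in> supp (card I) (card J) (submatrix X I J)"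
    and eq: "submatrix_pos I J u = submatrix_pos I J v"
  have "fst u < card I" "fst v < card I" "snd u < card J" "snd v < card J"
    using uv by (auto simp: supp_def)
  moreover have "sorted_list_of_set I ! fst u = sorted_list_of_set I ! fst v"
    "sorted_list_of_set J ! snd u = sorted_list_of_set J ! snd v"
    using eq unfolding submatrix_pos_def by auto
  ultimately have "fst u = fst v" "snd u = snd v" by (auto simp: nth_eq_iff_index_eq)
  thus "u = v" by (simp add: prod_eq_iff)
qed

lemma image_submatrix_pos:
  assumes I: "I \<subseteq> {..<m}" and J: "J \<subseteq> {..<n}"
  shows "submatrix_pos I J ` supp (card I) (card J) (submatrix X I J) = supp m n X \<inter> (I \<times> J)"
proof -
  let ?sI = "sorted_list_of_set I" and ?sJ = "sorted_list_of_set J"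
  have "finite I" "finite J" using I J by (auto intro: finite_subset)
  hence setI: "set ?sI = I" and setJ: "set ?sJ = J" by simp_all
  show ?thesis
  proof
    show "submatrix_pos I J ` supp (card I) (card J) (submatrix X I J) \<subseteq> supp m n X \<inter> (I \<times> J)"
    proof
      fix x assume "x \<in> submatrix_pos I J ` supp (card I) (card J) (submatrix X I J)"
      then obtain a b where ab: "a < card I" "b < card J" "submatrix X I J a b" "x = submatrix_pos I J (a, b)"
        by (auto simp: supp_def)
      have "?sI ! a \<in> I" "?sJ ! b \<in> J" using ab(1,2) setI setJ by (metis length_sorted_list_of_set nth_mem)+
      thus "x \<in> supp m n X \<inter> (I \<times> J)" using ab I J
        by (auto simp: supp_def submatrix_def submatrix_pos_def)
    qed
    show "supp m n X \<inter> (I \<times> J) \<subseteq> submatrix_pos I J ` supp (card I) (card J) (submatrix X I J)"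
    proof
      fix x assume x: "x \<in> supp m n X \<inter> (I \<times> J)"
      obtain i j where ij: "x = (i, j)" by (cases x) auto
      have "i \<in> set ?sI" "j \<in> set ?sJ" using x ij setI setJ by auto
      then obtain a b where ab: "a < card I" "?sI ! a = i" "b < card J" "?sJ ! b = j"
        by (metis in_set_conv_nth length_sorted_list_of_set)
      have "(a, b) \<in> supp (card I) (card J) (submatrix X I J)"
        using ab x ij by (auto simp: supp_def submatrix_def)
      moreover have "submatrix_pos I J (a, b) = x" using ab ij unfolding submatrix_pos_def by simp
      ultimately show "x \<in> submatrix_pos I J ` supp (card I) (card J) (submatrix X I J)" by force
    qed
  qed
qed

lemma rc_adj_submatrix:
  assumes I: "I \<subseteq> {..<m}" and J: "J \<subseteq> {..<n}"
    and uv: "u \<in> supp (card I) (card J) (submatrix X I J)" "v \<in> supp (card I) (card J) (submatrix X I J)"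
  shows "rc_adj (card I) (card J) (submatrix X I J) u v
    \<longleftrightarrow> rc_adj m n X (submatrix_pos I J u) (submatrix_pos I J v)"
proof -
  have inS: "submatrix_pos I J u \<in> supp m n X" "submatrix_pos I J v \<in> supp m n X"
    using uv image_submatrix_pos[OF I J, of X] by auto
  have "u \<noteq> v \<longleftrightarrow> submatrix_pos I J u \<noteq> submatrix_pos I J v"
    using inj_on_submatrix_pos uv by (auto dest: inj_onD)
  thus ?thesis using rc_adj_iff[OF uv] rc_adj_iff[OF inS] by (simp add: submatrix_def submatrix_pos_def)
qed

lemma firmI:
  assumes "\<And>I J. I \<subseteq> {..<m} \<Longrightarrow> J \<subseteq> {..<n} \<Longrightarrow>
     chromatic_number (supp m n X \<inter> (I \<times> J)) (\<lambda>u v. \<not> rc_adj m n X u v)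
     = clique_number (supp m n X \<inter> (I \<times> J)) (\<lambda>u v. \<not> rc_adj m n X u v)"
  shows "firm m n X"
  unfolding firm_def
proof (intro allI impI)
  fix I J assume I: "I \<subseteq> {..<m}" and J: "J \<subseteq> {..<n}"
  let ?S = "supp (card I) (card J) (submatrix X I J)"
  let ?EI = "rc_adj (card I) (card J) (submatrix X I J)" and ?E = "rc_adj m n X"
  have adj: "(\<not> ?EI u v) = (\<not> ?E (submatrix_pos I J u) (submatrix_pos I J v))"
    if "u \<in> ?S" "v \<in> ?S" "u \<noteq> v" for u v
    using rc_adj_submatrix[OF I J that(1,2)] by simp
  show "isol_num (card I) (card J) (submatrix X I J) = boolean_rank (card I) (card J) (submatrix X I J)"
    unfolding isol_num_eq_clique_number boolean_rank_eq_chromatic_number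
    using clique_number_iso[OF inj_on_submatrix_pos[of I J X], of "\<lambda>u v. \<not> ?EI u v" "\<lambda>u v. \<not> ?E u v", OF adj]
      chromatic_number_iso[OF inj_on_submatrix_pos[of I J X], of "\<lambda>u v. \<not> ?EI u v" "\<lambda>u v. \<not> ?E u v", OF adj]
      image_submatrix_pos[OF I J] assms[OF I J] by simp
qed

section \<open>Stretching\<close>

locale stretching =
  fixes m n :: nat and X :: bmat and l k :: nat
  assumes lk: "(l, k) \<in> supp m n X"
begin

abbreviation "Y \<equiv> stretch m n X l k"
abbreviation "EY \<equiv> rc_adj (Suc m) (Suc n) Y"

lemma l_k: "l < m" "k < n" "X l k"
  using lk by (auto simp: supp_def)

lemma stretch_inner: "i < m \<Longrightarrow> j < n \<Longrightarrow> Y i j = X i j"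
  unfolding stretch_def by simp

lemma stretch_last_row: "Y m j \<longleftrightarrow> j = k \<or> j = n"
  using l_k unfolding stretch_def by auto

lemma stretch_last_column: "Y i n \<longleftrightarrow> i = l \<or> i = m"
  using l_k unfolding stretch_def by auto

lemma supp_stretch: "supp (Suc m) (Suc n) Y = supp m n X \<union> {(l, n), (m, k), (m, n)}"
proof (intro equalityI subsetI)
  fix p assume "p \<in> supp (Suc m) (Suc n) Y"
  then obtain i j where p: "p = (i, j)" "i \<le> m" "j \<le> n" "Y i j" by (auto simp: supp_def)
  show "p \<in> supp m n X \<union> {(l, n), (m, k), (m, n)}"
  proof (cases "i < m \<and> j < n")
    case True thus ?thesis using p stretch_inner by (auto simp: supp_def)
  next
    case False
    hence "i = m \<or> j = n" using p by auto
    thus ?thesis using p stretch_last_row stretch_last_column by auto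
  qed
next
  fix p assume "p \<in> supp m n X \<union> {(l, n), (m, k), (m, n)}"
  thus "p \<in> supp (Suc m) (Suc n) Y"
    using l_k stretch_inner stretch_last_row stretch_last_column by (auto simp: supp_def)
qed

lemma rc_adj_stretch_inner:
  assumes "p \<in> supp m n X" "q \<in> supp m n X"
  shows "EY p q \<longleftrightarrow> rc_adj m n X p q"
proof -
  have "p \<in> supp (Suc m) (Suc n) Y" "q \<in> supp (Suc m) (Suc n) Y" using assms supp_stretch by auto
  moreover have "fst p < m" "snd p < n" "fst q < m" "snd q < n" using assms by (auto simp: supp_def)
  ultimately show ?thesis using rc_adj_iff[OF assms] rc_adj_iff[of p "Suc m" "Suc n" Y q]
    stretch_inner by simp
qed

lemma corners_clique: "is_clique EY {(l, n), (m, k), (m, n), (l, k)}"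
  unfolding is_clique_def
proof (intro ballI impI)
  fix p q assume pq: "p \<in> {(l, n), (m, k), (m, n), (l, k)}" "q \<in> {(l, n), (m, k), (m, n), (l, k)}" "p \<noteq> q"
  hence "p \<in> supp (Suc m) (Suc n) Y" "q \<in> supp (Suc m) (Suc n) Y" using lk supp_stretch by auto
  moreover have "Y (fst p) (snd q)" "Y (fst q) (snd p)"
    using pq(1,2) l_k stretch_inner stretch_last_row stretch_last_column by auto
  ultimately show "EY p q" using rc_adj_iff pq(3) by blast
qed

lemma rc_adj_corner:
  assumes "u \<in> supp (Suc m) (Suc n) Y" "EY (m, n) u"
  shows "u \<in> {(l, n), (m, k), (l, k)}"
proof -
  have "(m, n) \<in> supp (Suc m) (Suc n) Y" using supp_stretch by auto
  hence "Y m (snd u)" "Y (fst u) n" "u \<noteq> (m, n)" using rc_adj_iff assms by auto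
  thus ?thesis using stretch_last_row stretch_last_column by (cases u) auto
qed

lemma rc_adj_new_in_column:
  assumes "u \<in> supp (Suc m) (Suc n) Y" "EY (l, n) u"
  shows "fst u = l \<or> u = (m, k) \<or> u = (m, n)"
proof -
  have "(l, n) \<in> supp (Suc m) (Suc n) Y" using supp_stretch by auto
  hence "Y (fst u) n" using rc_adj_iff assms by auto
  moreover have "Y (fst u) (snd u)" using assms(1) by (auto simp: supp_def)
  ultimately show ?thesis using stretch_last_row stretch_last_column by (cases u) auto
qed

lemma rc_adj_new_in_row:
  assumes "u \<in> supp (Suc m) (Suc n) Y" "EY (m, k) u"
  shows "snd u = k \<or> u = (l, n) \<or> u = (m, n)"
proof -
  have "(m, k) \<in> supp (Suc m) (Suc n) Y" using l_k supp_stretch by auto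
  hence "Y m (snd u)" using rc_adj_iff assms by auto
  moreover have "Y (fst u) (snd u)" using assms(1) by (auto simp: supp_def)
  ultimately show ?thesis using stretch_last_row stretch_last_column by (cases u) auto
qed

lemma perfect_graph_stretch_inner:
  assumes "superfirm m n X"
  shows "perfect_graph (supp m n X) EY"
  using assms perfect_graph_cong[of "supp m n X" EY "rc_adj m n X"] rc_adj_stretch_inner
  unfolding superfirm_def by blast

lemma perfect_graph_complement_stretch_inner:
  assumes "superfirm m n X"
  shows "perfect_graph (supp m n X) (\<lambda>u v. \<not> EY u v)"
  by (rule perfect_graph_complement[OF finite_supp perfect_graph_stretch_inner[OF assms] rc_adj_commute])

lemma complement_chromatic_eq_clique_number_stretch:
  assumes sf: "superfirm m n X" and W: "W \<subseteq> supp (Suc m) (Suc n) Y" and s: "s \<in> W"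
    and simplicial: "is_clique EY {u \<in> W. EY s u}"
    and rest: "{u \<in> W. u \<noteq> s \<and> \<not> EY s u} \<subseteq> supp m n X"
  shows "chromatic_number W (\<lambda>u v. \<not> EY u v) = clique_number W (\<lambda>u v. \<not> EY u v)"
proof (rule chromatic_eq_clique_number_complement_simplicial[OF _ s rc_adj_commute simplicial])
  show "finite W" using W finite_supp by (rule finite_subset)
  show "chromatic_number {u \<in> W. u \<noteq> s \<and> \<not> EY s u} (\<lambda>u v. \<not> EY u v)
      = clique_number {u \<in> W. u \<noteq> s \<and> \<not> EY s u} (\<lambda>u v. \<not> EY u v)"
    by (rule perfect_graphD[OF perfect_graph_complement_stretch_inner[OF sf] rest])
qed

theorem firm_stretch:
  assumes sf: "superfirm m n X"
  shows "firm (Suc m) (Suc n) Y"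
proof (rule firmI)
  fix I J assume "I \<subseteq> {..<Suc m}" "J \<subseteq> {..<Suc n}"
  define W where "W = supp (Suc m) (Suc n) Y \<inter> (I \<times> J)"
  have WY: "W \<subseteq> supp (Suc m) (Suc n) Y" unfolding W_def by simp
  have WX: "W - {(l, n), (m, k), (m, n)} \<subseteq> supp m n X" using WY supp_stretch by auto
  have corner: "(m, n) \<in> W" if "(l, n) \<in> W" "(m, k) \<in> W"
    using that supp_stretch unfolding W_def by auto
  have adj_corner: "EY (m, n) (l, n)" "EY (m, n) (m, k)"
    using corners_clique l_k unfolding is_clique_def by auto
  consider "(m, n) \<in> W" | "(m, n) \<notin> W" "(l, n) \<in> W" | "(m, n) \<notin> W" "(l, n) \<notin> W" "(m, k) \<in> W"
    | "(m, n) \<notin> W" "(l, n) \<notin> W" "(m, k) \<notin> W" by blast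
  thus "chromatic_number W (\<lambda>u v. \<not> EY u v) = clique_number W (\<lambda>u v. \<not> EY u v)"
  proof cases
    case 1
    show ?thesis
    proof (rule complement_chromatic_eq_clique_number_stretch[OF sf WY 1])
      show "is_clique EY {u \<in> W. EY (m, n) u}"
        by (rule is_clique_subset[OF corners_clique]) (use WY rc_adj_corner in blast)
      show "{u \<in> W. u \<noteq> (m, n) \<and> \<not> EY (m, n) u} \<subseteq> supp m n X" using WX adj_corner by blast
    qed
  next
    case 2
    hence "(m, k) \<notin> W" using corner by blast
    show ?thesis
    proof (rule complement_chromatic_eq_clique_number_stretch[OF sf WY 2(2)])
      have "fst u = l" if "u \<in> W" "EY (l, n) u" for u
        using rc_adj_new_in_column[of u] that WY 2(1) \<open>(m, k) \<notin> W\<close> by blast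
      thus "is_clique EY {u \<in> W. EY (l, n) u}" using WY by (intro is_clique_row) auto
      show "{u \<in> W. u \<noteq> (l, n) \<and> \<not> EY (l, n) u} \<subseteq> supp m n X"
        using WX 2(1) \<open>(m, k) \<notin> W\<close> by blast
    qed
  next
    case 3
    show ?thesis
    proof (rule complement_chromatic_eq_clique_number_stretch[OF sf WY 3(3)])
      have "snd u = k" if "u \<in> W" "EY (m, k) u" for u
        using rc_adj_new_in_row[of u] that WY 3(1,2) by blast
      thus "is_clique EY {u \<in> W. EY (m, k) u}" using WY by (intro is_clique_column) auto
      show "{u \<in> W. u \<noteq> (m, k) \<and> \<not> EY (m, k) u} \<subseteq> supp m n X"
        using WX 3(1,2) by blast
    qed
  next
    case 4
    hence "W \<subseteq> supp m n X" using WX by blast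
    thus ?thesis by (rule perfect_graphD[OF perfect_graph_complement_stretch_inner[OF sf]])
  qed
qed

lemma row_column_clique:
  assumes "simplicial_one m n X l k"
  shows "is_clique EY {u \<in> supp m n X. fst u = l \<or> snd u = k}"
proof -
  let ?R = "{u \<in> supp m n X. fst u = l \<or> snd u = k}"
  have cross: "X (fst u) (snd v)" if "u \<in> ?R" "v \<in> ?R" for u v
  proof -
    have u: "fst u < m" "X (fst u) (snd u)" and v: "snd v < n" "X (fst v) (snd v)"
      using that by (auto simp: supp_def)
    show ?thesis
    proof (cases "fst u = l")
      case True thus ?thesis using that v l_k by auto
    next
      case False
      hence "snd u = k" using that by simp
      moreover have "snd v = k \<or> X l (snd v)" using that v by auto
      ultimately show ?thesis
        using assms u v unfolding simplicial_one_def supp_def by auto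
    qed
  qed
  show ?thesis unfolding is_clique_def
  proof (intro ballI impI)
    fix u v assume uv: "u \<in> ?R" "v \<in> ?R" "u \<noteq> v"
    hence "rc_adj m n X u v" using rc_adj_iff[of u m n X v] cross by simp
    thus "EY u v" using rc_adj_stretch_inner uv by simp
  qed
qed

theorem superfirm_stretch:
  assumes sf: "superfirm m n X" and simplicial: "simplicial_one m n X l k"
  shows "superfirm (Suc m) (Suc n) Y"
  unfolding superfirm_def perfect_graph_def
proof (intro allI impI antisym)
  fix W assume WY: "W \<subseteq> supp (Suc m) (Suc n) Y"
  have finW: "finite W" using WY finite_supp by (rule finite_subset)
  show "clique_number W EY \<le> chromatic_number W EY" by (rule clique_number_le_chromatic_number[OF finW])
  have W0: "W - {(l, n), (m, k), (m, n)} \<subseteq> supp m n X" using WY supp_stretch by auto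
  show "chromatic_number W EY \<le> clique_number W EY"
  proof (rule chromatic_le_clique_number_add_three[OF finW rc_adj_commute])
    show "(l, n) \<noteq> (m, k)" "(l, n) \<noteq> (m, n)" "(m, k) \<noteq> (m, n)" using l_k by auto
    show "EY (l, n) (m, k)" using corners_clique l_k unfolding is_clique_def by auto
    show "chromatic_number (W - {(l, n), (m, k), (m, n)}) EY = clique_number (W - {(l, n), (m, k), (m, n)}) EY"
      by (rule perfect_graphD[OF perfect_graph_stretch_inner[OF sf] W0])
    have "fst u = l" if "u \<in> W - {(l, n), (m, k), (m, n)}" "EY (l, n) u" for u
      using rc_adj_new_in_column[of u] that WY by blast
    moreover have "snd u = k" if "u \<in> W - {(l, n), (m, k), (m, n)}" "EY (m, k) u" for u
      using rc_adj_new_in_row[of u] that WY by blast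
    ultimately have "{u \<in> W - {(l, n), (m, k), (m, n)}. EY (l, n) u} \<union> {u \<in> W - {(l, n), (m, k), (m, n)}. EY (m, k) u}
        \<subseteq> {u \<in> supp m n X. fst u = l \<or> snd u = k}" using W0 by blast
    thus "is_clique EY ({u \<in> W - {(l, n), (m, k), (m, n)}. EY (l, n) u} \<union> {u \<in> W - {(l, n), (m, k), (m, n)}. EY (m, k) u})"
      by (rule is_clique_subset[OF row_column_clique[OF simplicial]])
    show "is_clique EY {u \<in> W. EY (m, n) u}"
      by (rule is_clique_subset[OF corners_clique]) (use WY rc_adj_corner in blast)
  qed
qed

end

theorem lemma2:
  fixes m n l k :: nat and X :: bmat
  assumes "superfirm m n X"
    and "(l, k) \<in> supp m n X"
  shows "firm (Suc m) (Suc n) (stretch m n X l k) \<and>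
    (simplicial_one m n X l k \<longrightarrow> superfirm (Suc m) (Suc n) (stretch m n X l k))"
proof -
  interpret stretching m n X l k by unfold_locales (rule assms(2))
  show ?thesis using firm_stretch[OF assms(1)] superfirm_stretch[OF assms(1)] by blast
qed

end
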